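(* For every prime power $q$ there exists a linear $(2,\Phi(q),q)$-AONT, i.e. an invertible $\Phi(q)\times\Phi(q)$ matrix over $\mathbb{F}_q$ all of whose $2\times2$ submatrices are invertible.
   Context: $\Phi$ denotes Euler's totient function, so $\Phi(p^r)=p^r-p^{r-1}$. A linear $(t,s,q)$-AONT over $\mathbb{F}_q$ is given by an invertible $s\times s$ matrix $M$ over $\mathbb{F}_q$ (the transform being $(y_1,\dots,y_s)=(x_1,\dots,x_s)M^{-1}$); $M$ defines a linear $(t,s,q)$-AONT iff every $t\times t$ submatrix of $M$ is invertible. *)

theory Defs
  imports "Jordan_Normal_Form.Matrix" "Jordan_Normal_Form.DL_Submatrix" "HOL-Number_Theory.Totient"
begin

definition linear_AONT_matrix :: "nat \<Rightarrow> nat \<Rightarrow> 'a::field mat \<Rightarrow> bool" where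
  "linear_AONT_matrix t s M \<longleftrightarrow>
     M \<in> carrier_mat s s \<and> invertible_mat M \<and>
     (\<forall>I J. I \<subseteq> {..<s} \<and> J \<subseteq> {..<s} \<and> card I = t \<and> card J = t
            \<longrightarrow> invertible_mat (submatrix M I J))"

end

(*
  Let q = p ^ (r + 1), m = p ^ r and n = totient q = (p - 1) * m, and choose distinct nonzero
  w 0, ..., w (n - 1) in F_q. Since x ^ q = x, taking m-th powers is injective on F_q, so the
  x i = w i ^ m are distinct and the matrix M with entries 1 / (x i - x j) (zero on the diagonal)
  has all 2 x 2 minors nonzero: clearing denominators, a minor vanishes only if
  (x i1 - x i2) * (x j1 - x j2) = 0, and if some x i - x j in it is zero, exactly one of its
  two products vanishes.

  Invertibility of M comes from the identity
    sum over e < (p - 1) * m of (e div m + 1) * z ^ e = - 1 / (z ^ m - 1)    in F_q,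
  obtained by summing blocks of m consecutive exponents, using (z ^ m) ^ p = z and p = 0.
  With z = w i / w j it factors M = A * B, where A = (w i ^ e) is a Vandermonde matrix and
  B = (- (e div m + 1) * w j ^ (- e - m)) is a transposed Vandermonde matrix scaled by the
  nonzero factors e div m + 1 < p and w j ^ (- m). For q = 2 the 1 x 1 identity matrix works,
  having no 2 x 2 submatrices.
*)
theory Submission
  imports Defs "Jordan_Normal_Form.Determinant" "HOL-Computational_Algebra.Polynomial" "HOL-Library.Cardinality"
begin

section \<open>Finite fields\<close>

lemma finite_field_power_card:
  fixes x :: "'a::{finite,field}"
  shows "x ^ CARD('a) = x"
proof -
  let ?U = "UNIV - {0::'a}"
  have card: "CARD('a) = Suc (card ?U)"
    by (simp add: card_Diff_singleton)
  show ?thesis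
  proof (cases "x = 0")
    case True
    then show ?thesis
      unfolding card by simp
  next
    case False
    have "bij_betw ((*) x) ?U ?U"
      by (rule bij_betwI[of _ _ _ "(*) (inverse x)"]) (use False in auto)
    then have "(\<Prod>y\<in>?U. x * y) = \<Prod>?U"
      using prod.reindex_bij_betw[of "(*) x" ?U ?U "\<lambda>y. y"] by simp
    moreover have "(\<Prod>y\<in>?U. x * y) = x ^ card ?U * \<Prod>?U"
      by (simp add: prod.distrib)
    moreover have "\<Prod>?U \<noteq> 0"
      by simp
    ultimately have "x ^ card ?U = 1"
      by (metis mult_cancel_right2)
    then show ?thesis
      unfolding card power_Suc by simp
  qed
qed

lemma card_finite_field_gt_1: "1 < CARD('a::{finite,field})"
  using card_mono[of UNIV "{0 :: 'a, 1}"] by simp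

lemma prime_CHAR_finite_field: "prime CHAR('a::{finite,field})"
  by (rule prime_CHAR_semidom) (simp add: finite_imp_CHAR_pos)

lemma of_nat_mult_mem_add_closed:
  fixes V :: "'a::semiring_1 set"
  assumes "0 \<in> V" "\<And>u v. u \<in> V \<Longrightarrow> v \<in> V \<Longrightarrow> u + v \<in> V" "v \<in> V"
  shows "of_nat k * v \<in> V"
proof (induction k)
  case (Suc k)
  then show ?case
    using assms(2,3) by (simp add: distrib_right)
qed (use assms(1) in simp)

lemma uminus_mem_add_closed:
  fixes V :: "'a::ring_1 set"
  assumes "CHAR('a) > 0" "0 \<in> V" "\<And>u v. u \<in> V \<Longrightarrow> v \<in> V \<Longrightarrow> u + v \<in> V" "v \<in> V"
  shows "- v \<in> V"
proof -
  have "of_nat (CHAR('a) - 1) * v + v = of_nat CHAR('a) * v"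
    using assms(1) by (simp add: of_nat_diff algebra_simps)
  then have "- v = of_nat (CHAR('a) - 1) * v"
    by (simp add: neg_eq_iff_add_eq_0 add.commute)
  then show ?thesis
    using of_nat_mult_mem_add_closed[OF assms(2-4)] by simp
qed

lemma mem_add_closed_if_of_nat_mult_mem:
  fixes V :: "'a::ring_1 set"
  assumes "prime CHAR('a)" "\<not> CHAR('a) dvd d"
    and "0 \<in> V" "\<And>u v. u \<in> V \<Longrightarrow> v \<in> V \<Longrightarrow> u + v \<in> V" "of_nat d * x \<in> V"
  shows "x \<in> V"
proof -
  have "coprime d CHAR('a)"
    using prime_imp_coprime[OF assms(1,2)] by (simp add: coprime_commute)
  then obtain e where "[e * d = 1] (mod CHAR('a))"
    using cong_solve_coprime_nat[of d "CHAR('a)"] by (auto simp: mult.commute)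
  then have "of_nat e * (of_nat d * x) = x"
    by (simp flip: of_nat_eq_iff_cong_CHAR mult.assoc of_nat_mult)
  then show ?thesis
    using of_nat_mult_mem_add_closed[OF assms(3-5)] by metis
qed

lemma inj_on_add_of_nat_mult:
  fixes V :: "'a::ring_1 set"
  assumes p: "prime CHAR('a)"
    and V: "0 \<in> V" "\<And>u v. u \<in> V \<Longrightarrow> v \<in> V \<Longrightarrow> u + v \<in> V" and x: "x \<notin> V"
  shows "inj_on (\<lambda>(v, k). v + of_nat k * x) (V \<times> {..<CHAR('a)})"
proof -
  have eq_if_le: "v1 = v2 \<and> k1 = k2"
    if "v1 \<in> V" "v2 \<in> V" "k2 \<le> k1" "k1 < CHAR('a)" "v1 + of_nat k1 * x = v2 + of_nat k2 * x"
    for v1 v2 k1 k2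
  proof -
    have "of_nat (k1 - k2) * x = v2 + - v1"
      using that(3,5) by (simp add: of_nat_diff algebra_simps)
    also have "\<dots> \<in> V"
      using V(2)[OF that(2) uminus_mem_add_closed[OF prime_gt_0_nat[OF p] V that(1)]] .
    finally have "CHAR('a) dvd (k1 - k2)"
      using mem_add_closed_if_of_nat_mult_mem[OF p _ V] x by metis
    then have "k1 = k2"
      using that(3,4) by (auto dest: dvd_imp_le)
    then show ?thesis
      using that(5) by simp
  qed
  show ?thesis
  proof (rule inj_onI, clarify)
    fix v1 k1 v2 k2
    assume "v1 \<in> V" "k1 < CHAR('a)" "v2 \<in> V" "k2 < CHAR('a)" "v1 + of_nat k1 * x = v2 + of_nat k2 * x"
    then show "v1 = v2 \<and> k1 = k2"
      using eq_if_le[of v1 v2 k2 k1] eq_if_le[of v2 v1 k1 k2] by (cases "k2 \<le> k1") auto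
  qed
qed

lemma add_closed_extension:
  fixes V :: "'a::{finite,ring_1} set"
  assumes p: "prime CHAR('a)"
    and V: "0 \<in> V" "\<And>u v. u \<in> V \<Longrightarrow> v \<in> V \<Longrightarrow> u + v \<in> V" and x: "x \<notin> V"
  defines "f \<equiv> \<lambda>(v, k). v + of_nat k * x"
  defines "W \<equiv> f ` (V \<times> {..<CHAR('a)})"
  shows "card W = card V * CHAR('a)" and "0 \<in> W" and "\<And>u v. u \<in> W \<Longrightarrow> v \<in> W \<Longrightarrow> u + v \<in> W"
    and "V \<subset> W"
proof -
  have p0: "CHAR('a) > 0"
    using p prime_gt_0_nat by blast
  have mem_W: "f (v, k) \<in> W" if "v \<in> V" "k < CHAR('a)" for v k
    unfolding W_def using that by blast
  show "card W = card V * CHAR('a)"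
    using inj_on_add_of_nat_mult[OF p V x]
    by (simp add: W_def f_def card_image card_cartesian_product)
  show "0 \<in> W"
    using mem_W[OF V(1) p0] by (simp add: f_def)
  show "u + v \<in> W" if uv: "u \<in> W" "v \<in> W" for u v
  proof -
    obtain v1 k1 v2 k2 where "v1 \<in> V" "v2 \<in> V" "u = v1 + of_nat k1 * x" "v = v2 + of_nat k2 * x"
      using uv by (fastforce simp: W_def f_def)
    moreover have "(of_nat (k1 + k2) :: 'a) = of_nat ((k1 + k2) mod CHAR('a))"
      by (simp only: of_nat_eq_iff_cong_CHAR cong_def mod_mod_trivial)
    ultimately have "u + v = f (v1 + v2, (k1 + k2) mod CHAR('a))"
      by (simp add: f_def algebra_simps flip: distrib_right)
    then show ?thesis
      using mem_W V(2) \<open>v1 \<in> V\<close> \<open>v2 \<in> V\<close> p0 by simp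
  qed
  have "V \<subseteq> W"
    using mem_W[OF _ p0] by (simp add: f_def subset_iff)
  moreover have "x \<in> W"
    using mem_W[OF V(1) prime_gt_1_nat[OF p]] by (simp add: f_def)
  ultimately show "V \<subset> W"
    using x by blast
qed

lemma card_eq_card_add_closed_times_CHAR_power:
  fixes V :: "'a::{finite,ring_1} set"
  assumes "prime CHAR('a)" "0 \<in> V" "\<And>u v. u \<in> V \<Longrightarrow> v \<in> V \<Longrightarrow> u + v \<in> V"
  shows "\<exists>r. CARD('a) = card V * CHAR('a) ^ r"
  using assms(2,3)
proof (induction "card (UNIV - V)" arbitrary: V rule: less_induct)
  case less
  show ?case
  proof (cases "V = UNIV")
    case True
    then show ?thesis
      by (metis mult.right_neutral power_0)
  next
    case False
    then obtain x where x: "x \<notin> V"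
      by blast
    define W where "W = (\<lambda>(v, k). v + of_nat k * x) ` (V \<times> {..<CHAR('a)})"
    note W = add_closed_extension[OF assms(1) less.prems x, folded W_def]
    have "card (UNIV - W) < card (UNIV - V)"
      using W(4) by (intro psubset_card_mono) auto
    then obtain r where "CARD('a) = card W * CHAR('a) ^ r"
      using less.hyps W(2,3) by blast
    then have "CARD('a) = card V * CHAR('a) ^ Suc r"
      by (simp add: W(1))
    then show ?thesis ..
  qed
qed

lemma card_finite_field_eq_CHAR_power:
  obtains r where "CARD('a::{finite,field}) = CHAR('a) ^ Suc r"
proof -
  obtain r where r: "CARD('a) = CHAR('a) ^ r"
    using card_eq_card_add_closed_times_CHAR_power[where 'a='a, OF prime_CHAR_finite_field, of "{0}"] by auto
  have "r \<noteq> 0"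
    using r card_finite_field_gt_1[where 'a='a] by (intro notI) simp
  with r that show ?thesis
    using not0_implies_Suc by blast
qed

lemma power_inj_finite_field:
  fixes x y :: "'a::{finite,field}"
  assumes "CARD('a) = m * k" "x ^ m = y ^ m"
  shows "x = y"
  by (metis assms finite_field_power_card power_mult)

lemma two_neq_zero_or_of_nat_eq_zero:
  assumes "CARD('a::{finite,field}) = m * CHAR('a)" "CARD('a) \<noteq> 2"
  shows "(2::'a) \<noteq> 0 \<or> (of_nat m :: 'a) = 0"
proof -
  obtain r where r: "CARD('a) = CHAR('a) ^ Suc r"
    by (rule card_finite_field_eq_CHAR_power)
  then have "m * CHAR('a) = CHAR('a) ^ r * CHAR('a)"
    using assms(1) by (simp only: power_Suc2)
  then have m: "m = CHAR('a) ^ r"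
    using prime_gt_0_nat[OF prime_CHAR_finite_field[where 'a='a]] by simp
  show ?thesis
  proof (cases "(2::'a) = 0")
    case True
    then have "CHAR('a) dvd 2"
      using of_nat_eq_0_iff_char_dvd[of 2, where 'a='a] by simp
    then have "CHAR('a) = 2"
      using primes_dvd_imp_eq prime_CHAR_finite_field two_is_prime_nat by blast
    then have "r \<noteq> 0"
      using r assms(2) by auto
    then show ?thesis
      using m by (simp add: of_nat_eq_0_iff_char_dvd)
  qed simp
qed

section \<open>A power sum identity in finite fields\<close>

lemma sum_div_times_power:
  fixes f :: "nat \<Rightarrow> 'a::comm_semiring_1"
  shows "(\<Sum>e<k * m. f (e div m) * z ^ e) = (\<Sum>t<k. f t * (z ^ m) ^ t) * (\<Sum>i<m. z ^ i)"
proof -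
  have "(\<Sum>e<k * m. f (e div m) * z ^ e)
      = (\<Sum>t<k. \<Sum>e\<in>{t * m..<t * m + m}. f (e div m) * z ^ e)"
    by (simp add: sum.nat_group)
  also have "\<dots> = (\<Sum>t<k. \<Sum>i<m. f t * (z ^ m) ^ t * z ^ i)"
  proof (rule sum.cong[OF refl])
    fix t
    have "(\<Sum>e\<in>{t * m..<t * m + m}. f (e div m) * z ^ e)
        = (\<Sum>i\<in>{0..<m}. f ((i + t * m) div m) * z ^ (i + t * m))"
      using sum.shift_bounds_nat_ivl[of "\<lambda>e. f (e div m) * z ^ e" 0 "t * m" m]
      by (simp only: add_0 add.commute)
    also have "\<dots> = (\<Sum>i<m. f t * (z ^ m) ^ t * z ^ i)"
      by (intro sum.cong) (auto simp: power_add power_mult mult.commute[of t m] mult_ac)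
    finally show "(\<Sum>e\<in>{t * m..<t * m + m}. f (e div m) * z ^ e)
        = (\<Sum>i<m. f t * (z ^ m) ^ t * z ^ i)" .
  qed
  also have "\<dots> = (\<Sum>t<k. f t * (z ^ m) ^ t) * (\<Sum>i<m. z ^ i)"
    by (simp add: sum_product)
  finally show ?thesis .
qed

lemma sum_Suc_times_power:
  fixes y :: "'a::comm_ring_1"
  shows "(y - 1) * (\<Sum>t<n. of_nat (Suc t) * y ^ t) = of_nat n * y ^ n - (\<Sum>t<n. y ^ t)"
  by (induction n) (simp_all add: algebra_simps)

lemma sum_Suc_times_power_CHAR:
  fixes y :: "'a::comm_ring_1"
  assumes "CHAR('a) > 0"
  shows "(y - 1) * (\<Sum>t<CHAR('a) - 1. of_nat (Suc t) * y ^ t) = - (\<Sum>t<CHAR('a). y ^ t)"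
proof -
  have "(of_nat (CHAR('a) - 1) :: 'a) = - 1"
    using assms by (simp add: of_nat_diff)
  moreover have "(\<Sum>t<CHAR('a). y ^ t) = (\<Sum>t<CHAR('a) - 1. y ^ t) + y ^ (CHAR('a) - 1)"
    using assms by (metis Suc_diff_1 sum.lessThan_Suc)
  ultimately show ?thesis
    using sum_Suc_times_power[of y "CHAR('a) - 1"] by simp
qed

lemma sum_Suc_div_times_power_eq_inverse:
  fixes z :: "'a::field"
  assumes p: "CHAR('a) > 0" and z: "z ^ (m * CHAR('a)) = z" "z ^ m \<noteq> 1"
  shows "(\<Sum>e<(CHAR('a) - 1) * m. of_nat (Suc (e div m)) * z ^ e) = - inverse (z ^ m - 1)"
proof -
  define y where "y = z ^ m"
  define R where "R = (\<Sum>t<CHAR('a) - 1. of_nat (Suc t) * y ^ t :: 'a)"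
  define G where "G = (\<Sum>t<CHAR('a). y ^ t)"
  define P where "P = (\<Sum>i<m. z ^ i)"
  have R: "(y - 1) * R = - G"
    unfolding R_def G_def by (rule sum_Suc_times_power_CHAR[OF p])
  have G: "(y - 1) * G = z - 1"
    using power_diff_1_eq[of y "CHAR('a)"] z(1) by (simp add: G_def y_def power_mult)
  have P: "(z - 1) * P = y - 1"
    using power_diff_1_eq[of z m] by (simp add: P_def y_def)
  have "(y - 1) * ((y - 1) * (R * P)) = (y - 1) * ((y - 1) * R) * P"
    by (simp only: mult.assoc)
  also have "\<dots> = - ((y - 1) * G * P)"
    by (simp add: R)
  also have "\<dots> = - (y - 1)"
    by (simp add: G P)
  finally have "(y - 1) * ((y - 1) * (R * P) + 1) = 0"
    by (simp add: distrib_left)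
  moreover have "y \<noteq> 1"
    using z(2) by (simp add: y_def)
  ultimately have "(y - 1) * (R * P) = - 1"
    by (simp add: eq_neg_iff_add_eq_0)
  then have "R * P = - inverse (y - 1)"
    using \<open>y \<noteq> 1\<close> by (simp add: field_simps)
  moreover have "(\<Sum>e<(CHAR('a) - 1) * m. of_nat (Suc (e div m)) * z ^ e) = R * P"
    unfolding R_def P_def y_def by (rule sum_div_times_power)
  ultimately show ?thesis
    by (simp add: y_def)
qed

lemma sum_Suc_div_eq_0:
  assumes "CHAR('a::field) > 0" "(2::'a) \<noteq> 0 \<or> (of_nat m :: 'a) = 0"
  shows "(\<Sum>e<(CHAR('a) - 1) * m. of_nat (Suc (e div m)) :: 'a) = 0"
proof -
  have "2 * (\<Sum>t<n. of_nat (Suc t)) = of_nat n * (of_nat (Suc n) :: 'a)" for n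
    by (induction n) (simp_all add: algebra_simps)
  from this[of "CHAR('a) - 1"] have "2 * (\<Sum>t<CHAR('a) - 1. of_nat (Suc t) :: 'a) = 0"
    using assms(1) by simp
  moreover have "(\<Sum>e<(CHAR('a) - 1) * m. of_nat (Suc (e div m)) :: 'a)
      = (\<Sum>t<CHAR('a) - 1. of_nat (Suc t)) * of_nat m"
    using sum_div_times_power[where f = "\<lambda>t. of_nat (Suc t) :: 'a" and z = 1] by simp
  ultimately show ?thesis
    using assms(2) by auto
qed

text \<open>For \<open>z ^ m = 1\<close> the right-hand side is the junk value \<open>- inverse 0 = 0\<close>; this case
  is where \<open>CARD('a) \<noteq> 2\<close> is needed, since over the field with two elements the sum is \<open>1\<close>.\<close>

lemma sum_Suc_div_times_power:
  fixes z :: "'a::{finite,field}"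
  assumes q: "CARD('a) = m * CHAR('a)" "CARD('a) \<noteq> 2"
  shows "(\<Sum>e<(CHAR('a) - 1) * m. of_nat (Suc (e div m)) * z ^ e) = - inverse (z ^ m - 1)"
proof -
  have p: "CHAR('a) > 0"
    using prime_CHAR_finite_field prime_gt_0_nat by blast
  show ?thesis
  proof (cases "z ^ m = 1")
    case True
    then have "z = 1"
      using power_inj_finite_field[OF q(1), of z 1] by simp
    then show ?thesis
      using sum_Suc_div_eq_0[OF p two_neq_zero_or_of_nat_eq_zero[OF q]] by simp
  next
    case False
    have "z ^ (m * CHAR('a)) = z"
      by (simp flip: q(1) add: finite_field_power_card)
    from p this False show ?thesis
      by (rule sum_Suc_div_times_power_eq_inverse)
  qed
qed

lemma inverse_diff_powers_eq_sum:
  fixes v w :: "'a::{finite,field}"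
  assumes q: "CARD('a) = m * CHAR('a)" "CARD('a) \<noteq> 2" and v: "v \<noteq> 0"
  shows "(\<Sum>e<(CHAR('a) - 1) * m. w ^ e * (- of_nat (Suc (e div m)) * (inverse v ^ m * inverse v ^ e)))
    = inverse (w ^ m - v ^ m)"
proof -
  define z where "z = w * inverse v"
  have "v * z = w"
    using v by (simp add: z_def field_simps)
  then have denom: "v ^ m * (z ^ m - 1) = w ^ m - v ^ m"
    by (simp add: right_diff_distrib flip: power_mult_distrib)
  have "(\<Sum>e<(CHAR('a) - 1) * m. w ^ e * (- of_nat (Suc (e div m)) * (inverse v ^ m * inverse v ^ e)))
      = - (inverse v ^ m) * (\<Sum>e<(CHAR('a) - 1) * m. of_nat (Suc (e div m)) * z ^ e)"
    unfolding z_def sum_distrib_left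
    by (rule sum.cong) (simp_all add: power_mult_distrib algebra_simps)
  also have "\<dots> = inverse v ^ m * inverse (z ^ m - 1)"
    unfolding sum_Suc_div_times_power[OF q] by simp
  also have "\<dots> = inverse (w ^ m - v ^ m)"
    by (simp add: power_inverse flip: denom)
  finally show ?thesis .
qed

section \<open>Determinants\<close>

lemma invertible_mat_if_det_nonzero:
  fixes A :: "'a::field mat"
  assumes A: "A \<in> carrier_mat n n" and "det A \<noteq> 0"
  shows "invertible_mat A"
proof -
  obtain B where "B \<in> carrier_mat n n" "B * A = 1\<^sub>m n" "A * B = 1\<^sub>m n"
    using det_non_zero_imp_unit[OF assms] unfolding Units_def ring_mat_def by auto
  then show ?thesis
    using A unfolding invertible_mat_def inverts_mat_def by auto
qed

lemma invertible_mat_2x2: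
  fixes A :: "'a::field mat"
  assumes A: "A \<in> carrier_mat 2 2" and D: "A $$ (0, 0) * A $$ (1, 1) \<noteq> A $$ (0, 1) * A $$ (1, 0)"
  shows "invertible_mat A"
proof -
  let ?D = "A $$ (0, 0) * A $$ (1, 1) - A $$ (0, 1) * A $$ (1, 0)"
  define adj where "adj = mat 2 2 (\<lambda>(i, j). if i = j then A $$ (1 - i, 1 - j) else - A $$ (i, j))"
  have adj: "adj \<in> carrier_mat 2 2"
    by (simp add: adj_def)
  have sum_2: "(\<Sum>k\<in>{0..<2}. f k) = f 0 + f 1" for f :: "nat \<Rightarrow> 'a"
    by (simp add: numeral_2_eq_2)
  have "A * adj = ?D \<cdot>\<^sub>m 1\<^sub>m 2"
    by (auto intro!: eq_matI simp: adj_def scalar_prod_def sum_2 less_2_cases_iff carrier_matD[OF A]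
        One_nat_def algebra_simps)
  then have "det A * det adj = ?D ^ 2"
    using det_mult[OF A adj] by simp
  then have "det A \<noteq> 0"
    using D by auto
  then show ?thesis
    by (rule invertible_mat_if_det_nonzero[OF A])
qed

lemma det_mat_scale_rows:
  fixes a :: "nat \<Rightarrow> 'a::comm_ring_1"
  shows "det (mat n n (\<lambda>(i, j). a i * f i j)) = prod a {0..<n} * det (mat n n (\<lambda>(i, j). f i j))"
proof -
  have "mat n n (\<lambda>(i, j). a i * f i j) = mat\<^sub>r n n (\<lambda>i. a i \<cdot>\<^sub>v vec n (f i))"
    "mat n n (\<lambda>(i, j). f i j) = mat\<^sub>r n n (\<lambda>i. vec n (f i))"
    by (auto intro!: eq_matI)
  then show ?thesis
    using det_rows_mul[of "\<lambda>i. vec n (f i)" n a] by simp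
qed

lemma det_mat_swap_indices:
  "det (mat n n (\<lambda>(i, j). f j i)) = det (mat n n (\<lambda>(i, j). f i j))"
proof -
  have "mat n n (\<lambda>(i, j). f j i) = transpose_mat (mat n n (\<lambda>(i, j). f i j))"
    by (auto intro!: eq_matI)
  then show ?thesis
    by (simp add: det_transpose[OF mat_carrier])
qed

lemma det_mat_scale_cols:
  fixes b :: "nat \<Rightarrow> 'a::comm_ring_1"
  shows "det (mat n n (\<lambda>(i, j). b j * f i j)) = prod b {0..<n} * det (mat n n (\<lambda>(i, j). f i j))"
  using det_mat_scale_rows[where a = b and f = "\<lambda>i j. f j i"]
    det_mat_swap_indices[of n "\<lambda>i j. b i * f j i"] det_mat_swap_indices[of n "\<lambda>i j. f j i"]
  by simp

lemma det_vandermonde_nonzero: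
  fixes x :: "nat \<Rightarrow> 'a::field"
  assumes inj: "inj_on x {..<n}"
  shows "det (mat n n (\<lambda>(i, j). x i ^ j)) \<noteq> 0"
proof
  define V where "V = mat n n (\<lambda>(i, j). x i ^ j)"
  assume "det (mat n n (\<lambda>(i, j). x i ^ j)) = 0"
  then obtain c where c: "c \<in> carrier_vec n" "c \<noteq> 0\<^sub>v n" "V *\<^sub>v c = 0\<^sub>v n"
    using det_0_iff_vec_prod_zero_field[of V n] by (auto simp: V_def)
  define P where "P = (\<Sum>j<n. monom (c $ j) j)"
  have coeff_P: "coeff P k = (if k < n then c $ k else 0)" for k
    unfolding P_def by (simp add: coeff_sum coeff_monom)
  have "poly P (x i) = (V *\<^sub>v c) $ i" if "i < n" for i
    using that c(1) by (simp add: P_def V_def poly_sum poly_monom scalar_prod_def atLeast0LessThan mult.commute)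
  then have roots: "x ` {..<n} \<subseteq> {r. poly P r = 0}"
    using c(3) by auto
  have "\<exists>k<n. c $ k \<noteq> 0"
  proof (rule ccontr)
    assume "\<not> (\<exists>k<n. c $ k \<noteq> 0)"
    then have "c = 0\<^sub>v n"
      using c(1) by (auto intro!: eq_vecI)
    with c(2) show False ..
  qed
  then obtain k where k: "k < n" "c $ k \<noteq> 0"
    by blast
  then have "P \<noteq> 0"
    using coeff_P[of k] by auto
  have "degree P < n"
    using k by (intro le_less_trans[OF degree_le[of "n - 1"]]) (auto simp: coeff_P)
  have "n = card (x ` {..<n})"
    using card_image[OF inj] by simp
  also have "\<dots> \<le> card {r. poly P r = 0}"
    using roots poly_roots_finite[OF \<open>P \<noteq> 0\<close>] by (rule card_mono[rotated])
  also have "\<dots> \<le> degree P"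
    by (rule card_poly_roots_bound[OF \<open>P \<noteq> 0\<close>])
  finally show False
    using \<open>degree P < n\<close> by simp
qed

lemma det_scaled_vandermonde_transpose_nonzero:
  fixes x :: "nat \<Rightarrow> 'a::field"
  assumes "inj_on x {..<n}" "\<And>i. i < n \<Longrightarrow> a i \<noteq> 0" "\<And>j. j < n \<Longrightarrow> b j \<noteq> 0"
  shows "det (mat n n (\<lambda>(i, j). a i * (b j * x j ^ i))) \<noteq> 0"
proof -
  have "det (mat n n (\<lambda>(i, j). a i * (b j * x j ^ i)))
      = prod a {0..<n} * prod b {0..<n} * det (mat n n (\<lambda>(i, j). x i ^ j))"
    using det_mat_swap_indices[of n "\<lambda>i j. x i ^ j"]
    by (simp add: det_mat_scale_rows det_mat_scale_cols mult.assoc)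
  then show ?thesis
    using assms det_vandermonde_nonzero[OF assms(1)] by simp
qed

section \<open>Skew Cauchy matrices\<close>

text \<open>The diagonal entries are \<open>inverse 0 = 0\<close>.\<close>

definition skew_cauchy_mat :: "nat \<Rightarrow> (nat \<Rightarrow> 'a::field) \<Rightarrow> 'a mat" where
  "skew_cauchy_mat n x = mat n n (\<lambda>(i, j). inverse (x i - x j))"

lemma dim_skew_cauchy_mat [simp]:
  "dim_row (skew_cauchy_mat n x) = n" "dim_col (skew_cauchy_mat n x) = n"
  by (simp_all add: skew_cauchy_mat_def)

lemma skew_cauchy_mat_carrier [simp]: "skew_cauchy_mat n x \<in> carrier_mat n n"
  by (simp add: skew_cauchy_mat_def)

lemma index_skew_cauchy_mat [simp]:
  "i < n \<Longrightarrow> j < n \<Longrightarrow> skew_cauchy_mat n x $$ (i, j) = inverse (x i - x j)"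
  by (simp add: skew_cauchy_mat_def)

lemma inverse_diff_minor_nonzero:
  fixes a1 a2 b1 b2 :: "'a::field"
  assumes a: "a1 \<noteq> a2" and b: "b1 \<noteq> b2"
  shows "inverse (a1 - b1) * inverse (a2 - b2) \<noteq> inverse (a1 - b2) * inverse (a2 - b1)"
proof
  assume eq: "inverse (a1 - b1) * inverse (a2 - b2) = inverse (a1 - b2) * inverse (a2 - b1)"
  consider "a1 = b1 \<or> a2 = b2" | "a1 = b2 \<or> a2 = b1" | "a1 \<noteq> b1" "a2 \<noteq> b2" "a1 \<noteq> b2" "a2 \<noteq> b1"
    by blast
  then show False
  proof cases
    case 1
    with a b have "a1 \<noteq> b2" "a2 \<noteq> b1"
      by auto
    with eq 1 show False
      by auto
  next
    case 2
    with a b have "a1 \<noteq> b1" "a2 \<noteq> b2"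
      by auto
    with eq 2 show False
      by auto
  next
    case 3
    with eq have "(a1 - b2) * (a2 - b1) = (a1 - b1) * (a2 - b2)"
      by (simp add: field_simps)
    then have "(a1 - a2) * (b1 - b2) = 0"
      by (simp add: algebra_simps)
    with a b show False
      by simp
  qed
qed

lemma pick_card_2:
  assumes "I \<subseteq> {..<n}" "card I = 2"
  shows "pick I 0 < pick I 1" "pick I 1 < n" "card {i. i < n \<and> i \<in> I} = 2"
proof -
  show "pick I 0 < pick I 1"
    using assms(2) by (intro pick_mono) auto
  show "pick I 1 < n"
    using assms pick_in_set[of 1 I] by auto
  have "{i. i < n \<and> i \<in> I} = I"
    using assms(1) by auto
  then show "card {i. i < n \<and> i \<in> I} = 2"
    using assms(2) by simp
qed

lemma invertible_submatrix_skew_cauchy_mat: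
  fixes x :: "nat \<Rightarrow> 'a::field"
  assumes inj: "inj_on x {..<n}"
    and I: "I \<subseteq> {..<n}" "card I = 2" and J: "J \<subseteq> {..<n}" "card J = 2"
  shows "invertible_mat (submatrix (skew_cauchy_mat n x) I J)"
proof -
  let ?S = "submatrix (skew_cauchy_mat n x) I J"
  note pI = pick_card_2[OF I] and pJ = pick_card_2[OF J]
  have S: "?S \<in> carrier_mat 2 2"
  proof (rule carrier_matI)
    show "dim_row ?S = 2"
      unfolding dim_submatrix(1) dim_skew_cauchy_mat by (rule pI(3))
    show "dim_col ?S = 2"
      unfolding dim_submatrix(2) dim_skew_cauchy_mat by (rule pJ(3))
  qed
  have S_index: "?S $$ (k, l) = inverse (x (pick I k) - x (pick J l))" if "k < 2" "l < 2" for k l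
  proof -
    have "?S $$ (k, l) = skew_cauchy_mat n x $$ (pick I k, pick J l)"
      using that by (intro submatrix_index) (simp_all only: dim_skew_cauchy_mat pI(3) pJ(3))
    moreover have "pick I k < n" "pick J l < n"
      using that pI(1,2) pJ(1,2) by (auto simp: less_2_cases_iff)
    ultimately show ?thesis
      by simp
  qed
  have "x (pick I 0) \<noteq> x (pick I 1)" "x (pick J 0) \<noteq> x (pick J 1)"
    using pI(1,2) pJ(1,2) inj_onD[OF inj, of "pick I 0" "pick I 1"]
      inj_onD[OF inj, of "pick J 0" "pick J 1"]
    by auto
  from inverse_diff_minor_nonzero[OF this]
  have "?S $$ (0, 0) * ?S $$ (1, 1) \<noteq> ?S $$ (0, 1) * ?S $$ (1, 0)"
    using S_index[of 0 0] S_index[of 1 1] S_index[of 0 1] S_index[of 1 0] by simp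
  then show ?thesis
    by (rule invertible_mat_2x2[OF S])
qed

lemma linear_AONT_matrix_2_skew_cauchy_mat:
  fixes x :: "nat \<Rightarrow> 'a::field"
  assumes "invertible_mat (skew_cauchy_mat n x)" "inj_on x {..<n}"
  shows "linear_AONT_matrix 2 n (skew_cauchy_mat n x)"
  using assms invertible_submatrix_skew_cauchy_mat[OF assms(2)]
  unfolding linear_AONT_matrix_def by simp

lemma linear_AONT_matrix_one_mat_if_less:
  assumes "s < t"
  shows "linear_AONT_matrix t s (1\<^sub>m s :: 'a::field mat)"
  unfolding linear_AONT_matrix_def
proof (intro conjI allI impI)
  show "invertible_mat (1\<^sub>m s :: 'a mat)"
    unfolding invertible_mat_def inverts_mat_def by (auto intro!: exI[of _ "1\<^sub>m s"])
  fix I J :: "nat set"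
  assume "I \<subseteq> {..<s} \<and> J \<subseteq> {..<s} \<and> card I = t \<and> card J = t"
  then have "t \<le> s"
    using card_mono[of "{..<s}" I] by auto
  with assms show "invertible_mat (submatrix (1\<^sub>m s) I J :: 'a mat)"
    by simp
qed simp

lemma skew_cauchy_mat_powers_eq_mult:
  fixes w :: "nat \<Rightarrow> 'a::{finite,field}"
  assumes q: "CARD('a) = m * CHAR('a)" "CARD('a) \<noteq> 2" and n: "n = (CHAR('a) - 1) * m"
    and w: "\<And>i. i < n \<Longrightarrow> w i \<noteq> 0"
  shows "skew_cauchy_mat n (\<lambda>i. w i ^ m) = mat n n (\<lambda>(i, e). w i ^ e) *
    mat n n (\<lambda>(e, j). - of_nat (Suc (e div m)) * (inverse (w j) ^ m * inverse (w j) ^ e))"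
    (is "_ = ?A * ?B")
proof (rule eq_matI)
  fix i j
  assume "i < dim_row (?A * ?B)" "j < dim_col (?A * ?B)"
  then have ij: "i < n" "j < n"
    by auto
  have "(?A * ?B) $$ (i, j)
      = (\<Sum>e<n. w i ^ e * (- of_nat (Suc (e div m)) * (inverse (w j) ^ m * inverse (w j) ^ e)))"
    using ij by (simp add: scalar_prod_def atLeast0LessThan)
  also have "\<dots> = inverse (w i ^ m - w j ^ m)"
    unfolding n by (rule inverse_diff_powers_eq_sum[OF q w[OF ij(2)]])
  finally show "skew_cauchy_mat n (\<lambda>i. w i ^ m) $$ (i, j) = (?A * ?B) $$ (i, j)"
    using ij by simp
qed auto

lemma invertible_skew_cauchy_mat_powers:
  fixes w :: "nat \<Rightarrow> 'a::{finite,field}"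
  assumes q: "CARD('a) = m * CHAR('a)" "CARD('a) \<noteq> 2" and n: "n = (CHAR('a) - 1) * m"
    and w: "inj_on w {..<n}" "\<And>i. i < n \<Longrightarrow> w i \<noteq> 0"
  shows "invertible_mat (skew_cauchy_mat n (\<lambda>i. w i ^ m))"
proof -
  define A where "A = mat n n (\<lambda>(i, e). w i ^ e)"
  define B where "B = mat n n (\<lambda>(e, j). - of_nat (Suc (e div m)) * (inverse (w j) ^ m * inverse (w j) ^ e))"
  have A: "A \<in> carrier_mat n n" and B: "B \<in> carrier_mat n n"
    by (simp_all add: A_def B_def)
  have M: "skew_cauchy_mat n (\<lambda>i. w i ^ m) = A * B"
    unfolding A_def B_def by (rule skew_cauchy_mat_powers_eq_mult[OF q n w(2)])
  have "det A \<noteq> 0"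
    unfolding A_def by (rule det_vandermonde_nonzero[OF w(1)])
  moreover have "det B \<noteq> 0"
    unfolding B_def
  proof (rule det_scaled_vandermonde_transpose_nonzero)
    show "inj_on (\<lambda>j. inverse (w j)) {..<n}"
      using w(1) by (simp add: inj_on_def)
    show "- of_nat (Suc (e div m)) \<noteq> (0 :: 'a)" if "e < n" for e
    proof -
      have "e div m < CHAR('a) - 1"
        using that unfolding n by (rule less_mult_imp_div_less)
      then have "\<not> CHAR('a) dvd Suc (e div m)"
        by (auto dest: dvd_imp_le)
      then show ?thesis
        unfolding neg_equal_0_iff_equal of_nat_eq_0_iff_char_dvd .
    qed
  qed (simp add: w(2))
  ultimately have "det (A * B) \<noteq> 0"
    by (simp add: det_mult[OF A B])
  then show ?thesis
    unfolding M by (rule invertible_mat_if_det_nonzero[OF mult_carrier_mat[OF A B]])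
qed

lemma finite_field_card_totient:
  obtains m where "CARD('a::{finite,field}) = m * CHAR('a)" "totient CARD('a) = (CHAR('a) - 1) * m"
proof -
  obtain r where r: "CARD('a) = CHAR('a) ^ Suc r"
    by (rule card_finite_field_eq_CHAR_power)
  show ?thesis
  proof (rule that)
    show "CARD('a) = CHAR('a) ^ r * CHAR('a)"
      unfolding r by (rule power_Suc2)
    show "totient CARD('a) = (CHAR('a) - 1) * CHAR('a) ^ r"
      unfolding r totient_prime_power_Suc[OF prime_CHAR_finite_field] by (rule mult.commute)
  qed
qed

lemma obtain_inj_nonzero:
  assumes "n < CARD('a)"
  obtains w :: "nat \<Rightarrow> 'a::field" where "inj_on w {..<n}" "\<And>i. i < n \<Longrightarrow> w i \<noteq> 0"
proof -
  have "card {..<n} \<le> card (UNIV - {0 :: 'a})"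
    using assms by (simp add: card_Diff_singleton card_ge_0_finite)
  then obtain w :: "nat \<Rightarrow> 'a" where "w ` {..<n} \<subseteq> UNIV - {0}" "inj_on w {..<n}"
    using card_le_inj[of "{..<n}" "UNIV - {0 :: 'a}"] assms card_ge_0_finite by force
  then show ?thesis
    using that by blast
qed

theorem theorem2p19:
  fixes q :: nat
  assumes "card (UNIV :: 'a set) = q"
  shows "\<exists>M :: 'a::{finite,field} mat. linear_AONT_matrix 2 (totient q) M"
proof (cases "q = 2")
  case True
  then show ?thesis
    using linear_AONT_matrix_one_mat_if_less[of "totient q" 2] by auto
next
  case False
  obtain m where card: "CARD('a) = m * CHAR('a)" and totient: "totient q = (CHAR('a) - 1) * m"
    using finite_field_card_totient assms by metis
  obtain w :: "nat \<Rightarrow> 'a" where w: "inj_on w {..<totient q}" "\<And>i. i < totient q \<Longrightarrow> w i \<noteq> 0"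
    using obtain_inj_nonzero totient_less card_finite_field_gt_1[where 'a='a] assms by metis
  have "invertible_mat (skew_cauchy_mat (totient q) (\<lambda>i. w i ^ m))"
    using invertible_skew_cauchy_mat_powers[OF card _ totient w] False assms by simp
  moreover have "inj_on (\<lambda>i. w i ^ m) {..<totient q}"
    using w(1) power_inj_finite_field[OF card] by (auto simp: inj_on_def)
  ultimately show ?thesis
    using linear_AONT_matrix_2_skew_cauchy_mat by blast
qed

end
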